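(* Let $m,n$ be positive integers with $m\geq n$. Then \begin{multline*} \sum_{k=0}^{n} \binom{m+k}{k} \binom{m}{k} \binom{n+k}{k} \binom{n}{k} \Bigl[ 1+k \bigl(H_{m+k}^{(1)} +H_{m-k}^{(1)} + H_{n+k}^{(1)} + H_{n-k}^{(1)} -4H_k^{(1)}\bigr) \Bigr]\\ +\sum_{k=n+1}^{m} (-1)^{k-n} \binom{m+k}{k} \binom{m}{k} \binom{n+k}{k} \Big/ \binom{k-1}{n} =(-1)^{m+n}. \end{multline*}
   Context: For non-negative integers $i$ and $n$, the generalized harmonic sum is $H^{(i)}_{n}:=\sum_{j=1}^{n} j^{-i}$ for $n\ge 1$, and $H^{(i)}_{0}:=0$. An empty sum (e.g. the second sum when $m=n$) equals $0$. *)

theory Defs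
  imports Complex_Main
begin

definition genH :: "nat \<Rightarrow> nat \<Rightarrow> real" where
  "genH i n = (\<Sum>j=1..n. 1 / (real j) ^ i)"

end

theory Submission
  imports Defs "HOL-Computational_Algebra.Polynomial" "HOL-Analysis.Harmonic_Numbers"
begin

text \<open>
  For N \<ge> 0 the numbers c_N(j) = (-1)^(N+j) binom(N+j, j) binom(N, j), 0 \<le> j \<le> N, are the
  coefficients of the partial fraction expansion of (t-1)...(t-N) / (t(t+1)...(t+N)), i.e. the
  Lagrange weights of the monic polynomial (t-1)...(t-N) at the nodes 0, -1, ..., -N; comparing
  leading coefficients gives sum_j c_N(j) = 1.  Expand 1 = (sum_k c_m(k)) (sum_j c_n(j)) and
  write each off-diagonal product as c_m(k) c_n(j) (x_k - x_j) / (x_k - x_j) with x_i = -i;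
  after swapping the order of summation in half of these terms only the diagonal terms and the
  divided sums sum_(j \<noteq> k) c_N(j) / (j - k) remain.  For k \<le> N such a sum is the derivative at
  -k of the expansion with its pole at -k removed, a logarithmic derivative which produces the
  harmonic numbers; for k > N it is the value of the rational function at -k, which produces
  the reciprocal binomial coefficient.
\<close>

definition node_poly :: "('i \<Rightarrow> 'a::comm_ring_1) \<Rightarrow> 'i set \<Rightarrow> 'a poly" where
  "node_poly x A = (\<Prod>i\<in>A. [:- x i, 1:])"

definition lagrange_weight :: "'a::field poly \<Rightarrow> ('i \<Rightarrow> 'a) \<Rightarrow> 'i set \<Rightarrow> 'i \<Rightarrow> 'a" where
  "lagrange_weight p x I j = poly p (x j) / poly (node_poly x (I - {j})) (x j)"

lemma poly_node_poly [simp]: "poly (node_poly x A) t = (\<Prod>i\<in>A. t - x i)"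
  by (simp add: node_poly_def poly_prod)

lemma degree_node_poly: "finite A \<Longrightarrow> degree (node_poly x A :: 'a::idom poly) = card A"
  unfolding node_poly_def by (subst degree_prod_sum_eq) auto

lemma lead_coeff_node_poly [simp]: "lead_coeff (node_poly x A :: 'a::idom poly) = 1"
  by (simp add: node_poly_def lead_coeff_prod)

lemma poly_node_poly_at_node_nonzero:
  fixes x :: "'i \<Rightarrow> 'a::idom"
  assumes "finite I" "inj_on x I" "k \<in> I"
  shows "poly (node_poly x (I - {k})) (x k) \<noteq> 0"
  using assms by (auto simp: inj_on_def)

lemma lagrange_interpolation:
  fixes x :: "'i \<Rightarrow> 'a::field"
  assumes I: "finite I" and inj: "inj_on x I" and deg: "degree p < card I"
  shows "p = (\<Sum>j\<in>I. smult (lagrange_weight p x I j) (node_poly x (I - {j})))"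
    (is "p = ?q")
proof (rule poly_eqI_degree[where A = "x ` I"])
  fix z assume "z \<in> x ` I"
  then obtain k where k: "k \<in> I" "z = x k" by auto
  have vanish: "poly (node_poly x (I - {j})) (x k) = 0" if "j \<in> I - {k}" for j
    using that I k(1) by (auto intro!: prod_zero)
  have "poly ?q z = lagrange_weight p x I k * poly (node_poly x (I - {k})) (x k)"
    using I k by (simp add: poly_sum sum.remove vanish del: poly_node_poly)
  also have "\<dots> = poly p z"
    using poly_node_poly_at_node_nonzero[OF I inj k(1)] k by (simp add: lagrange_weight_def)
  finally show "poly p z = poly ?q z" ..
next
  show "degree p < card (x ` I)" using deg card_image[OF inj] by simp
next
  have "degree ?q \<le> card I - 1"
  proof (rule degree_sum_le)
    fix j assume "j \<in> I"
    then show "degree (smult (lagrange_weight p x I j) (node_poly x (I - {j}))) \<le> card I - 1"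
      using I by (simp add: degree_node_poly)
  qed (use I in auto)
  then show "degree ?q < card (x ` I)" using deg card_image[OF inj] by simp
qed

lemma coeff_eq_sum_lagrange_weight:
  fixes x :: "'i \<Rightarrow> 'a::field"
  assumes I: "finite I" and inj: "inj_on x I" and deg: "degree p < card I"
  shows "coeff p (card I - 1) = (\<Sum>j\<in>I. lagrange_weight p x I j)"
proof -
  have "coeff (node_poly x (I - {j})) (card I - 1) = 1" if "j \<in> I" for j
    using that I degree_node_poly[of "I - {j}" x] by (metis lead_coeff_node_poly card_Diff_singleton finite_Diff)
  then show ?thesis
    by (subst lagrange_interpolation[OF assms]) (simp add: coeff_sum)
qed

lemma lagrange_partial_fractions:
  fixes x :: "'i \<Rightarrow> 'a::field"
  assumes I: "finite I" and inj: "inj_on x I" and deg: "degree p < card I"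
    and t: "t \<notin> x ` I"
  shows "poly p t / poly (node_poly x I) t = (\<Sum>j\<in>I. lagrange_weight p x I j / (t - x j))"
proof -
  have split: "poly (node_poly x I) t = (t - x j) * poly (node_poly x (I - {j})) t" if "j \<in> I" for j
    using that I by (simp add: prod.remove)
  have nonzero: "poly (node_poly x (I - {j})) t \<noteq> 0" "t - x j \<noteq> 0" if "j \<in> I" for j
    using that I t by auto
  have "poly p t = (\<Sum>j\<in>I. lagrange_weight p x I j * poly (node_poly x (I - {j})) t)"
    by (subst lagrange_interpolation[OF I inj deg]) (simp add: poly_sum del: poly_node_poly)
  then show ?thesis
    by (simp add: sum_divide_distrib split nonzero del: poly_node_poly cong: sum.cong)
qed

lemma poly_pderiv_node_poly:
  "finite A \<Longrightarrow> poly (pderiv (node_poly x A)) t = (\<Sum>a\<in>A. \<Prod>i\<in>A - {a}. t - x i)"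
  by (simp add: node_poly_def pderiv_prod pderiv_pCons poly_sum poly_prod)

lemma poly_pderiv_node_poly_at_node:
  assumes "finite A" "k \<in> A"
  shows "poly (pderiv (node_poly x A)) (x k) = (\<Prod>i\<in>A - {k}. x k - x i)"
proof -
  have "(\<Prod>i\<in>A - {a}. x k - x i) = 0" if "a \<in> A - {k}" for a
    using that assms by (intro prod_zero) auto
  then show ?thesis
    using assms by (simp add: poly_pderiv_node_poly sum.remove)
qed

lemma poly_pderiv_node_poly_logarithmic:
  fixes x :: "'i \<Rightarrow> 'a::field"
  assumes "finite A" "t \<notin> x ` A"
  shows "poly (pderiv (node_poly x A)) t = poly (node_poly x A) t * (\<Sum>a\<in>A. 1 / (t - x a))"
proof -
  have "(\<Prod>i\<in>A - {a}. t - x i) = (\<Prod>i\<in>A. t - x i) / (t - x a)" if "a \<in> A" for a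
  proof -
    have "t - x a \<noteq> 0" using that assms(2) by auto
    then show ?thesis using that assms(1) by (simp add: prod.remove)
  qed
  then show ?thesis
    using assms by (simp add: poly_pderiv_node_poly sum_distrib_left)
qed

lemma poly_pderiv_at_node:
  fixes x :: "'i \<Rightarrow> 'a::field"
  assumes I: "finite I" and inj: "inj_on x I" and deg: "degree p < card I" and k: "k \<in> I"
  defines "w \<equiv> lagrange_weight p x I" and "Q \<equiv> node_poly x (I - {k})"
  shows "poly (pderiv p) (x k)
           = w k * poly (pderiv Q) (x k) + poly Q (x k) * (\<Sum>j\<in>I - {k}. w j / (x k - x j))"
proof -
  have off_node: "poly (pderiv (node_poly x (I - {j}))) (x k) = poly Q (x k) / (x k - x j)"
    if j: "j \<in> I - {k}" for j
  proof -
    have "poly (pderiv (node_poly x (I - {j}))) (x k) = (\<Prod>i\<in>I - {j} - {k}. x k - x i)"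
      using I j k by (intro poly_pderiv_node_poly_at_node) auto
    also have "\<dots> = poly Q (x k) / (x k - x j)"
    proof -
      have "x k - x j \<noteq> 0" using j k inj by (auto simp: inj_on_def)
      moreover have "I - {j} - {k} = I - {k} - {j}" by auto
      ultimately show ?thesis
        using I j by (simp add: Q_def prod.remove)
    qed
    finally show ?thesis .
  qed
  have "pderiv p = (\<Sum>j\<in>I. smult (w j) (pderiv (node_poly x (I - {j}))))"
    unfolding w_def
    by (subst lagrange_interpolation[OF I inj deg])
       (simp add: higher_pderiv_sum[where n = 1, simplified] pderiv_smult)
  then show ?thesis
    using I k
    by (simp add: poly_sum sum.remove off_node sum_distrib_left mult.commute Q_def del: poly_node_poly)
qed

lemma sum_lagrange_weight_divided_difference:
  fixes x :: "'i \<Rightarrow> 'a::field" and r :: "'j \<Rightarrow> 'a"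
  assumes I: "finite I" and inj: "inj_on x I" and k: "k \<in> I"
    and R: "finite R" "card R < card I" and root_free: "x k \<notin> r ` R"
  defines "w \<equiv> lagrange_weight (node_poly r R) x I"
  shows "(\<Sum>j\<in>I - {k}. w j / (x k - x j))
           = w k * ((\<Sum>i\<in>R. 1 / (x k - r i)) - (\<Sum>i\<in>I - {k}. 1 / (x k - x i)))"
proof -
  define P where "P = node_poly r R"
  define Q where "Q = node_poly x (I - {k})"
  have Q_nonzero: "poly Q (x k) \<noteq> 0"
    unfolding Q_def by (rule poly_node_poly_at_node_nonzero[OF I inj k])
  have "poly (pderiv P) (x k)
          = w k * poly (pderiv Q) (x k) + poly Q (x k) * (\<Sum>j\<in>I - {k}. w j / (x k - x j))"
    unfolding P_def Q_def w_def using R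
    by (intro poly_pderiv_at_node[OF I inj _ k]) (simp add: degree_node_poly)
  moreover have "poly (pderiv P) (x k) = poly P (x k) * (\<Sum>i\<in>R. 1 / (x k - r i))"
    unfolding P_def using R(1) root_free by (rule poly_pderiv_node_poly_logarithmic)
  moreover have "poly (pderiv Q) (x k) = poly Q (x k) * (\<Sum>i\<in>I - {k}. 1 / (x k - x i))"
    unfolding Q_def using I inj k by (intro poly_pderiv_node_poly_logarithmic) (auto simp: inj_on_def)
  moreover have "poly P (x k) = w k * poly Q (x k)"
    using Q_nonzero by (simp add: w_def P_def Q_def lagrange_weight_def del: poly_node_poly)
  ultimately have "poly Q (x k) * (\<Sum>j\<in>I - {k}. w j / (x k - x j))
      = poly Q (x k) * (w k * ((\<Sum>i\<in>R. 1 / (x k - r i)) - (\<Sum>i\<in>I - {k}. 1 / (x k - x i))))"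
    by (simp add: algebra_simps)
  then show ?thesis
    using Q_nonzero by simp
qed

lemma harm_add_diff: "harm (N + k) - harm k = (\<Sum>i=1..N. 1 / (real k + real i) :: real)"
  by (induction N) (simp_all add: harm_Suc field_simps)

lemma sum_inverse_diff_except_eq_harm:
  assumes "k \<le> N"
  shows "(\<Sum>i\<in>{0..N} - {k}. 1 / (real i - real k)) = harm (N - k) - (harm k :: real)"
proof -
  have split: "{0..N} - {k} = {..<k} \<union> {Suc k..N}" using assms by auto
  have "(\<Sum>i<k. 1 / (real i - real k)) = (\<Sum>i<k. 1 / (real (k - Suc i) - real k))"
    by (rule sum.nat_diff_reindex [symmetric])
  also have "\<dots> = (\<Sum>i<k. - inverse (real (Suc i)))"
    by (intro sum.cong) (auto simp: field_simps)
  also have "\<dots> = - harm k"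
    by (simp add: harm_altdef sum_negf)
  finally have below: "(\<Sum>i<k. 1 / (real i - real k)) = - harm k" .
  have "(\<Sum>i=Suc k..N. 1 / (real i - real k)) = (\<Sum>i=1..N - k. 1 / real i)"
    using assms sum.shift_bounds_cl_nat_ivl[of "\<lambda>i. 1 / (real i - real k)" 1 k "N - k"]
    by (simp add: add.commute)
  also have "\<dots> = harm (N - k)" by (simp add: harm_def inverse_eq_divide)
  finally show ?thesis
    using below by (subst split, subst sum.union_disjoint) auto
qed

lemma prod_falling_eq_binomial:
  "(\<Prod>i=0..N. real k - real i) = real k * fact N * real (k - 1 choose N)"
proof -
  have "(\<Prod>i=0..N. real k - real i) = fact (Suc N) * real (k choose Suc N)"
    by (simp add: binomial_gbinomial gbinomial_Suc)
  also have "\<dots> = fact N * real (Suc N * (k choose Suc N))"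
    by (simp add: algebra_simps)
  also have "\<dots> = real k * fact N * real (k - 1 choose N)"
    by (simp only: binomial_absorption) (simp add: algebra_simps)
  finally show ?thesis .
qed

lemma prod_rising_eq_fact: "(\<Prod>i=1..N. real j + real i) = fact (N + j) / (fact j :: real)"
proof (induction N)
  case (Suc N)
  have "(\<Prod>i=1..Suc N. real j + real i) = (\<Prod>i=1..N. real j + real i) * (real j + real (Suc N))"
    by simp
  also have "\<dots> = fact (N + j) / fact j * real (Suc N + j)"
    by (simp only: Suc.IH) simp
  also have "\<dots> = fact (Suc N + j) / fact j"
    by (simp only: add_Suc fact_Suc) simp
  finally show ?case .
qed simp

lemma prod_diff_except_eq_fact:
  assumes "j \<le> N"
  shows "(\<Prod>i\<in>{0..N} - {j}. real i - real j) = (-1) ^ j * fact j * fact (N - j)"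
proof -
  have split: "{0..N} - {j} = {..<j} \<union> {Suc j..N}" using assms by auto
  have "(\<Prod>i<j. real i - real j) = (\<Prod>i<j. real (j - Suc i) - real j)"
    by (rule prod.nat_diff_reindex [symmetric])
  also have "\<dots> = (\<Prod>i<j. (-1) * real (Suc i))"
    by (intro prod.cong) auto
  also have "\<dots> = (-1) ^ j * fact j"
    by (simp only: prod.distrib prod_constant card_lessThan) (simp add: fact_prod_Suc atLeast0LessThan)
  finally have below: "(\<Prod>i<j. real i - real j) = (-1) ^ j * fact j" .
  have "(\<Prod>i=Suc j..N. real i - real j) = (\<Prod>i=1..N - j. real i)"
    using assms prod.shift_bounds_cl_nat_ivl[of "\<lambda>i. real i - real j" 1 j "N - j"]
    by (simp add: add.commute)
  also have "\<dots> = fact (N - j)" by (simp add: fact_prod)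
  finally show ?thesis
    using below by (subst split, subst prod.union_disjoint) auto
qed

text \<open>The weight c_N(j): the coefficient of 1 / (t + j) in (t-1)...(t-N) / (t(t+1)...(t+N)).\<close>

definition pf_weight :: "nat \<Rightarrow> nat \<Rightarrow> real" where
  "pf_weight N = lagrange_weight (node_poly real {1..N}) (\<lambda>i. - real i) {0..N}"

lemma inj_on_neg_real: "inj_on (\<lambda>i. - real i) A"
  by (auto simp: inj_on_def)

lemma poly_node_poly_of_nat_neg:
  "poly (node_poly real {1..N}) (- real j) = (-1) ^ N * (fact (N + j) / fact j)"
proof -
  have "poly (node_poly real {1..N}) (- real j) = (\<Prod>i=1..N. (-1) * (real j + real i))"
    unfolding poly_node_poly by (intro prod.cong) auto
  then show ?thesis
    by (simp only: prod.distrib prod_constant prod_rising_eq_fact) simp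
qed

lemma pf_weight_eq:
  assumes "j \<le> N"
  shows "pf_weight N j = (-1) ^ (N + j) * real (N + j choose j) * real (N choose j)"
proof -
  have "poly (node_poly (\<lambda>i. - real i) ({0..N} - {j})) (- real j) = (-1) ^ j * fact j * fact (N - j)"
    using prod_diff_except_eq_fact[OF assms] by simp
  then have "pf_weight N j = (-1) ^ N * (fact (N + j) / fact j) / ((-1) ^ j * fact j * fact (N - j))"
    by (simp only: pf_weight_def lagrange_weight_def poly_node_poly_of_nat_neg)
  also have "\<dots> = (-1) ^ (N + j) * (fact (N + j) / (fact j * fact N)) * (fact N / (fact j * fact (N - j)))"
    by (simp add: power_add field_simps)
  finally show ?thesis
    using assms by (simp add: binomial_fact)
qed

lemma sum_pf_weight: "(\<Sum>j=0..N. pf_weight N j) = 1"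
proof -
  have "coeff (node_poly real {1..N}) N = 1"
    using lead_coeff_node_poly[of real "{1..N}"] by (simp add: degree_node_poly)
  then show ?thesis
    using coeff_eq_sum_lagrange_weight[of "{0..N}" "\<lambda>i. - real i" "node_poly real {1..N}"]
    by (simp add: pf_weight_def inj_on_neg_real degree_node_poly)
qed

definition pf_divided_sum :: "nat \<Rightarrow> nat \<Rightarrow> real" where
  "pf_divided_sum N k = (\<Sum>j\<in>{0..N} - {k}. pf_weight N j / (real j - real k))"

lemma pf_divided_sum_node:
  assumes "k \<le> N"
  shows "pf_divided_sum N k = pf_weight N k * (2 * harm k - harm (N + k) - harm (N - k))"
proof -
  have "pf_divided_sum N k = (\<Sum>j\<in>{0..N} - {k}. pf_weight N j / (- real k - - real j))"
    by (simp add: pf_divided_sum_def)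
  also have "\<dots> = pf_weight N k * ((\<Sum>i=1..N. 1 / (- real k - real i)) - (\<Sum>i\<in>{0..N} - {k}. 1 / (- real k - - real i)))"
    unfolding pf_weight_def using assms
    by (intro sum_lagrange_weight_divided_difference) (auto simp: inj_on_neg_real)
  also have "(\<Sum>i=1..N. 1 / (- real k - real i)) = - (\<Sum>i=1..N. 1 / (real k + real i))"
    unfolding sum_negf[symmetric] by (intro sum.cong) (auto simp: field_simps)
  also have "\<dots> = - (harm (N + k) - harm k)"
    by (simp add: harm_add_diff)
  also have "(\<Sum>i\<in>{0..N} - {k}. 1 / (- real k - - real i)) = harm (N - k) - harm k"
    using sum_inverse_diff_except_eq_harm[OF assms] by simp
  finally show ?thesis
    by (simp add: algebra_simps)
qed

lemma pf_divided_sum_outside: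
  assumes "N < k"
  shows "pf_divided_sum N k = - real (N + k choose k) / (real k * real (k - 1 choose N))"
proof -
  have "{0..N} - {k} = {0..N}" using assms by auto
  then have "pf_divided_sum N k = (\<Sum>j=0..N. pf_weight N j / (- real k - - real j))"
    by (simp add: pf_divided_sum_def)
  also have "\<dots> = poly (node_poly real {1..N}) (- real k) / poly (node_poly (\<lambda>i. - real i) {0..N}) (- real k)"
    unfolding pf_weight_def using assms
    by (intro lagrange_partial_fractions[symmetric]) (auto simp: inj_on_neg_real degree_node_poly)
  also have "poly (node_poly (\<lambda>i. - real i) {0..N}) (- real k) = (\<Prod>i=0..N. (-1) * (real k - real i))"
    unfolding poly_node_poly by (intro prod.cong) auto
  also have "\<dots> = (-1) ^ Suc N * (\<Prod>i=0..N. real k - real i)"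
    by (simp only: prod.distrib prod_constant) simp
  also have "\<dots> = (-1) ^ Suc N * (real k * fact N * real (k - 1 choose N))"
    by (simp only: prod_falling_eq_binomial)
  also have "poly (node_poly real {1..N}) (- real k) = (-1) ^ N * (fact (N + k) / fact k)"
    by (rule poly_node_poly_of_nat_neg)
  also have "fact (N + k) = real (N + k choose k) * fact k * (fact N :: real)"
    by (simp add: binomial_fact)
  finally show ?thesis
    using assms by (simp add: field_simps)
qed

lemma sum_offdiagonal_swap:
  assumes "finite I"
  shows "(\<Sum>k\<in>I. \<Sum>j\<in>I - {k}. f k j) = (\<Sum>j\<in>I. \<Sum>k\<in>I - {j}. f k j)"
proof -
  have "\<And>k. I - {k} = {j \<in> I. k \<noteq> j}" "\<And>j. I - {j} = {k \<in> I. k \<noteq> j}" by auto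
  then show ?thesis
    using sum.swap_restrict[OF assms assms, of f "\<lambda>k j. k \<noteq> j"] by simp
qed

lemma sum_product_divided_differences:
  fixes x a b :: "'i \<Rightarrow> 'a::field"
  assumes I: "finite I" and inj: "inj_on x I"
  shows "(\<Sum>k\<in>I. a k) * (\<Sum>j\<in>I. b j)
           = (\<Sum>k\<in>I. a k * b k + x k * a k * (\<Sum>j\<in>I - {k}. b j / (x k - x j))
                               + x k * b k * (\<Sum>j\<in>I - {k}. a j / (x k - x j)))"
proof -
  have split: "a k * b j = x k * a k * b j / (x k - x j) + x j * a k * b j / (x j - x k)"
    if "k \<in> I" "j \<in> I - {k}" for k j
  proof -
    have nz: "x k - x j \<noteq> 0" using that inj by (auto simp: inj_on_def)
    have "x j * a k * b j / (x j - x k) = - (x j * a k * b j / (x k - x j))"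
      by (metis minus_diff_eq minus_divide_right)
    then have "x k * a k * b j / (x k - x j) + x j * a k * b j / (x j - x k)
                 = (x k - x j) * (a k * b j) / (x k - x j)"
      by (simp add: diff_divide_distrib algebra_simps)
    then show ?thesis using nz by simp
  qed
  have inner: "(\<Sum>j\<in>I - {k}. a k * b j) = (\<Sum>j\<in>I - {k}. x k * a k * b j / (x k - x j))
                 + (\<Sum>j\<in>I - {k}. x j * a k * b j / (x j - x k))" if "k \<in> I" for k
    unfolding sum.distrib[symmetric] using that by (intro sum.cong refl split)
  have "(\<Sum>k\<in>I. a k) * (\<Sum>j\<in>I. b j) = (\<Sum>k\<in>I. a k * b k + (\<Sum>j\<in>I - {k}. a k * b j))"
    using I by (simp add: sum_product sum.remove)
  also have "\<dots> = (\<Sum>k\<in>I. a k * b k + (\<Sum>j\<in>I - {k}. x k * a k * b j / (x k - x j)))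
                 + (\<Sum>k\<in>I. \<Sum>j\<in>I - {k}. x j * a k * b j / (x j - x k))"
    by (simp add: inner sum.distrib cong: sum.cong)
  also have "(\<Sum>k\<in>I. \<Sum>j\<in>I - {k}. x j * a k * b j / (x j - x k))
               = (\<Sum>k\<in>I. x k * b k * (\<Sum>j\<in>I - {k}. a j / (x k - x j)))"
    by (subst sum_offdiagonal_swap[OF I]) (simp add: sum_distrib_left mult_ac)
  finally show ?thesis
    by (simp add: sum.distrib sum_distrib_left mult_ac)
qed

lemma genH_1_eq_harm: "genH 1 n = harm n"
  by (simp add: genH_def harm_def inverse_eq_divide)

lemma pf_weight_product_expansion:
  assumes "n \<le> m"
  shows "(\<Sum>k=0..n. pf_weight m k * pf_weight n k - real k * pf_weight m k * pf_divided_sum n k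
                     - real k * pf_weight n k * pf_divided_sum m k)
         + (\<Sum>k=n+1..m. - (real k * pf_weight m k * pf_divided_sum n k)) = 1"
proof -
  define b where "b j = (if j \<le> n then pf_weight n j else 0)" for j
  define R where "R k = pf_weight m k * b k - real k * pf_weight m k * pf_divided_sum n k
                        - real k * b k * pf_divided_sum m k" for k
  have sum_b: "(\<Sum>j=0..m. b j) = 1"
  proof -
    have "{j \<in> {0..m}. j \<le> n} = {0..n}" using assms by auto
    then show ?thesis
      using sum.inter_filter[of "{0..m}" "pf_weight n" "\<lambda>j. j \<le> n"]
      by (simp add: b_def sum_pf_weight)
  qed
  have divided_b: "(\<Sum>j\<in>{0..m} - {k}. b j / (real j - real k)) = pf_divided_sum n k" for k
  proof -
    have "(\<Sum>j\<in>{0..m} - {k}. b j / (real j - real k))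
            = (\<Sum>j\<in>{0..m} - {k}. if j \<le> n then pf_weight n j / (real j - real k) else 0)"
      by (intro sum.cong) (simp_all add: b_def)
    also have "\<dots> = (\<Sum>j\<in>{j \<in> {0..m} - {k}. j \<le> n}. pf_weight n j / (real j - real k))"
      by (rule sum.inter_filter[symmetric]) simp
    also have "{j \<in> {0..m} - {k}. j \<le> n} = {0..n} - {k}" using assms by auto
    finally show ?thesis by (simp add: pf_divided_sum_def)
  qed
  have "1 = (\<Sum>k=0..m. pf_weight m k) * (\<Sum>j=0..m. b j)"
    by (simp add: sum_pf_weight sum_b)
  also have "\<dots> = (\<Sum>k=0..m. R k)"
    using sum_product_divided_differences[of "{0..m}" "\<lambda>i. - real i" "pf_weight m" b]
    by (simp add: inj_on_neg_real divided_b pf_divided_sum_def[of m] R_def)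
  also have "\<dots> = (\<Sum>k=0..n. R k) + (\<Sum>k=n+1..m. R k)"
    using assms sum.ub_add_nat[of 0 n R "m - n"] by simp
  finally show ?thesis
    by (simp add: R_def b_def)
qed

lemma pf_expansion_term_node:
  assumes "k \<le> n" "n \<le> m"
  shows "pf_weight m k * pf_weight n k - real k * pf_weight m k * pf_divided_sum n k
           - real k * pf_weight n k * pf_divided_sum m k
         = (-1) ^ (m + n) * (real (m + k choose k) * real (m choose k) * real (n + k choose k) * real (n choose k)
             * (1 + real k * (harm (m + k) + harm (m - k) + harm (n + k) + harm (n - k) - 4 * harm k)))"
proof -
  have sign: "(-1::real) ^ (m + k) * (-1) ^ (n + k) = (-1) ^ (m + n)"
    by (simp add: power_add mult_ac flip: power_mult_distrib)
  show ?thesis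
    using assms
    by (simp add: pf_divided_sum_node pf_weight_eq sign[symmetric] algebra_simps)
qed

lemma pf_expansion_term_outside:
  assumes "n < k" "k \<le> m"
  shows "- (real k * pf_weight m k * pf_divided_sum n k)
         = (-1) ^ (m + n) * ((-1) ^ (k - n) * real (m + k choose k) * real (m choose k)
             * real (n + k choose k) / real (k - 1 choose n))"
proof -
  have sign: "(-1::real) ^ (m + k) = (-1) ^ (m + n) * (-1) ^ (k - n)"
    using assms by (simp flip: power_add)
  show ?thesis
    using assms by (simp add: pf_divided_sum_outside pf_weight_eq sign)
qed

theorem theorem1p2:
  fixes m n :: nat
  assumes "m \<ge> 1" and "n \<ge> 1" and "m \<ge> n"
  shows "(\<Sum>k=0..n. real (m + k choose k) * real (m choose k) * real (n + k choose k) * real (n choose k)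
            * (1 + real k * (genH 1 (m + k) + genH 1 (m - k) + genH 1 (n + k) + genH 1 (n - k) - 4 * genH 1 k)))
       + (\<Sum>k=n+1..m. (-1) ^ (k - n) * real (m + k choose k) * real (m choose k) * real (n + k choose k)
            / real (k - 1 choose n))
       = (-1) ^ (m + n)"
    (is "?A + ?B = _")
proof -
  have "n \<le> m" using assms by simp
  have node_terms: "(\<Sum>k=0..n. pf_weight m k * pf_weight n k - real k * pf_weight m k * pf_divided_sum n k
                                 - real k * pf_weight n k * pf_divided_sum m k)
                    = (-1) ^ (m + n) * ?A"
    unfolding sum_distrib_left genH_1_eq_harm
    using \<open>n \<le> m\<close> by (intro sum.cong refl) (simp add: pf_expansion_term_node)
  have outside_terms: "(\<Sum>k=n+1..m. - (real k * pf_weight m k * pf_divided_sum n k))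
                       = (-1) ^ (m + n) * ?B"
    unfolding sum_distrib_left by (intro sum.cong refl) (simp add: pf_expansion_term_outside)
  have expansion: "(-1) ^ (m + n) * (?A + ?B) = 1"
    using pf_weight_product_expansion[OF \<open>n \<le> m\<close>]
    unfolding node_terms outside_terms distrib_left .
  have "?A + ?B = ((-1) ^ (m + n) * (-1) ^ (m + n)) * (?A + ?B)"
    by (simp only: minus_one_mult_self mult_1_left)
  also have "\<dots> = (-1) ^ (m + n)"
    by (simp only: mult.assoc[of "(-1) ^ (m + n)" "(-1) ^ (m + n)" "?A + ?B"] expansion mult_1_right)
  finally show ?thesis .
qed

end
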